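(* Fix $\kappa\in[0,1]$ and consider the optimization problem (SMOP2) $$\min_{(\mathbf a,\mathbf s)}\ f_\kappa(\bar{\mathbf a},\mathbf s):=\kappa\,\|\bar{\mathbf a}-\bar\zeta\|_2^2+(1-\kappa)\,\|\mathbf s\|_2^2$$ subject to $\mathbf z_i-\mathbf a_i=0$ and $\mathbf z_i\in\mathbb D_i$ for all $i\in[1:\mathcal I]$, and $(\bar{\mathbf a},\mathbf s)\in\mathbb S$, where $\bar{\mathbf a}=\frac1{\mathcal I}\sum_{i=1}^{\mathcal I}\mathbf a_i$. Then there exists an optimal solution $(\bar{\mathbf a}^\star,\mathbf s^\star)$ of (SMOP2). For $\kappa\in(0,1)$ this solution $(\bar{\mathbf a}^\star,\mathbf s^\star)$ is unique. Furthermore, for $\kappa=0$ the optimal value $h(\mathbf s^\star)=\|\mathbf s^\star\|_2^2$ is unique, and for $\kappa=1$ the optimal value $g(\bar{\mathbf a}^\star)=\|\bar{\mathbf a}^\star-\bar\zeta\|_2^2$ is unique; in particular, $\mathbf s^\star$ is unique for $\kappa=0$ and $\bar{\mathbf a}^\star$ is unique for $\kappa=1$.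
   Context: Setting (a network of $\mathcal I\in\mathbb N$ residential energy systems with batteries). Fix an integer horizon $N\ge 2$, a time $k\in\mathbb N_0$, a step length $T>0$, and write $[m:n]=\{m,m+1,\dots,n\}$. For each $i\in[1:\mathcal I]$ the following are given: constants $\alpha_i,\beta_i,\gamma_i\in(0,1]$, a capacity $C_i\ge0$, bounds $\underline u_i<0<\bar u_i$, an initial state $x_i(k)\in[0,C_i]$, and data $w_i(n)\in\mathbb R$ for $n\in[k:k+N-1]$. Let $\mathbb U_i$ be the set of $(u^-,u^+)\in\mathbb R^2$ with $\underline u_i\le u^-\le0$, $0\le u^+\le\bar u_i$ and $0\le u^-/\underline u_i+u^+/\bar u_i\le1$. Let $\mathbb D_i\subset\mathbb R^N$ be the set of vectors $\mathbf z_i=(z_i(k),\dots,z_i(k+N-1))^\top$ for which there exist $(u_i^-(n),u_i^+(n))\in\mathbb U_i$, $n\in[k:k+N-1]$, such that $x_i(n+1)=\alpha_i x_i(n)+T(\beta_iu_i^+(n)+u_i^-(n))\in[0,C_i]$ and $z_i(n)=w_i(n)+u_i^+(n)+\gamma_iu_i^-(n)$ for all $n\in[k:k+N-1]$. A reference vector $\bar\zeta\in\mathbb R^N$ and tube bounds $\underline{\mathbf c},\bar{\mathbf c}\in\mathbb R^N$ are given. Define $$\mathbb S=\Big\{(\bar{\mathbf z},\mathbf s)\in\mathbb R^N\times\mathbb R^{2N}_{\ge0}:\ \begin{pmatrix}I\\-I\end{pmatrix}\bar{\mathbf z}-\mathbf s\le\begin{pmatrix}\bar{\mathbf c}\\-\underline{\mathbf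 c}\end{pmatrix}\Big\}$$ (componentwise inequality, $I$ the $N\times N$ identity). The variables are $\mathbf a=(\mathbf a_1^\top,\dots,\mathbf a_{\mathcal I}^\top)^\top\in\mathbb R^{\mathcal IN}$ with $\mathbf a_i\in\mathbb R^N$, $\mathbf s\in\mathbb R^{2N}_{\ge0}$, and $\mathbf z_i\in\mathbb R^N$. *)

theory Defs
  imports Main "HOL-Analysis.Analysis"
begin

text \<open>Vectors in R^N are represented as functions nat => real; only the entries
  at the time indices n in the window {k..<k+N} matter.  The slack vector
  s in R^{2N} is represented by two nonnegative vectors (sp, sm): sp is the
  slack of the upper tube constraint, sm that of the lower one.\<close>

definition window :: "nat \<Rightarrow> nat \<Rightarrow> nat set" where
  "window k N = {k..<k+N}"

definition Uset :: "real \<Rightarrow> real \<Rightarrow> (real \<times> real) set" where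
  "Uset ul ub = {(um, up). ul \<le> um \<and> um \<le> 0 \<and> 0 \<le> up \<and> up \<le> ub \<and>
      0 \<le> um / ul + up / ub \<and> um / ul + up / ub \<le> 1}"

definition Dset :: "nat \<Rightarrow> nat \<Rightarrow> real \<Rightarrow> real \<Rightarrow> real \<Rightarrow> real \<Rightarrow> real \<Rightarrow> real \<Rightarrow> real
    \<Rightarrow> real \<Rightarrow> (nat \<Rightarrow> real) \<Rightarrow> (nat \<Rightarrow> real) set" where
  "Dset N k T \<alpha> \<beta> \<gamma> C ul ub x0 w =
     {z. \<exists>um up x. x k = x0 \<and>
        (\<forall>n\<in>window k N. (um n, up n) \<in> Uset ul ub \<and>
            x (n+1) = \<alpha> * x n + T * (\<beta> * up n + um n) \<and>
            0 \<le> x (n+1) \<and> x (n+1) \<le> C \<and>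
            z n = w n + up n + \<gamma> * um n)}"

definition avg :: "nat \<Rightarrow> (nat \<Rightarrow> nat \<Rightarrow> real) \<Rightarrow> nat \<Rightarrow> real" where
  "avg I a n = (1 / real I) * (\<Sum>i=1..I. a i n)"

definition Sset :: "nat \<Rightarrow> nat \<Rightarrow> (nat \<Rightarrow> real) \<Rightarrow> (nat \<Rightarrow> real) \<Rightarrow> (nat \<Rightarrow> real)
    \<Rightarrow> (nat \<Rightarrow> real) \<Rightarrow> (nat \<Rightarrow> real) \<Rightarrow> bool" where
  "Sset k N clb cub abar sp sm \<longleftrightarrow>
     (\<forall>n\<in>window k N. 0 \<le> sp n \<and> 0 \<le> sm n \<and>
        abar n - sp n \<le> cub n \<and> - abar n - sm n \<le> - clb n)"

definition gfun :: "nat \<Rightarrow> nat \<Rightarrow> (nat \<Rightarrow> real) \<Rightarrow> (nat \<Rightarrow> real) \<Rightarrow> real" where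
  "gfun k N \<zeta> abar = (\<Sum>n\<in>window k N. (abar n - \<zeta> n)^2)"

definition hfun :: "nat \<Rightarrow> nat \<Rightarrow> (nat \<Rightarrow> real) \<Rightarrow> (nat \<Rightarrow> real) \<Rightarrow> real" where
  "hfun k N sp sm = (\<Sum>n\<in>window k N. (sp n)^2 + (sm n)^2)"

definition fobj :: "real \<Rightarrow> nat \<Rightarrow> nat \<Rightarrow> (nat \<Rightarrow> real) \<Rightarrow> (nat \<Rightarrow> real)
    \<Rightarrow> (nat \<Rightarrow> real) \<Rightarrow> (nat \<Rightarrow> real) \<Rightarrow> real" where
  "fobj \<kappa> k N \<zeta> abar sp sm = \<kappa> * gfun k N \<zeta> abar + (1 - \<kappa>) * hfun k N sp sm"

definition feasible :: "nat \<Rightarrow> nat \<Rightarrow> real \<Rightarrow> nat \<Rightarrow> (nat \<Rightarrow> real) \<Rightarrow> (nat \<Rightarrow> real)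
    \<Rightarrow> (nat \<Rightarrow> real) \<Rightarrow> (nat \<Rightarrow> real) \<Rightarrow> (nat \<Rightarrow> real) \<Rightarrow> (nat \<Rightarrow> real) \<Rightarrow> (nat \<Rightarrow> real)
    \<Rightarrow> (nat \<Rightarrow> nat \<Rightarrow> real) \<Rightarrow> (nat \<Rightarrow> real) \<Rightarrow> (nat \<Rightarrow> real)
    \<Rightarrow> (nat \<Rightarrow> nat \<Rightarrow> real) \<Rightarrow> (nat \<Rightarrow> real) \<Rightarrow> (nat \<Rightarrow> real) \<Rightarrow> bool" where
  "feasible N k T I \<alpha> \<beta> \<gamma> C ul ub x0 w clb cub a sp sm \<longleftrightarrow>
     (\<exists>z. \<forall>i\<in>{1..I}. z i \<in> Dset N k T (\<alpha> i) (\<beta> i) (\<gamma> i) (C i) (ul i) (ub i) (x0 i) (w i) \<and>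
            (\<forall>n\<in>window k N. z i n - a i n = 0)) \<and>
     Sset k N clb cub (avg I a) sp sm"

definition optimal :: "real \<Rightarrow> nat \<Rightarrow> nat \<Rightarrow> real \<Rightarrow> nat \<Rightarrow> (nat \<Rightarrow> real) \<Rightarrow> (nat \<Rightarrow> real)
    \<Rightarrow> (nat \<Rightarrow> real) \<Rightarrow> (nat \<Rightarrow> real) \<Rightarrow> (nat \<Rightarrow> real) \<Rightarrow> (nat \<Rightarrow> real) \<Rightarrow> (nat \<Rightarrow> real)
    \<Rightarrow> (nat \<Rightarrow> nat \<Rightarrow> real) \<Rightarrow> (nat \<Rightarrow> real) \<Rightarrow> (nat \<Rightarrow> real) \<Rightarrow> (nat \<Rightarrow> real)
    \<Rightarrow> (nat \<Rightarrow> nat \<Rightarrow> real) \<Rightarrow> (nat \<Rightarrow> real) \<Rightarrow> (nat \<Rightarrow> real) \<Rightarrow> bool" where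
  "optimal \<kappa> N k T I \<alpha> \<beta> \<gamma> C ul ub x0 w \<zeta> clb cub a sp sm \<longleftrightarrow>
     feasible N k T I \<alpha> \<beta> \<gamma> C ul ub x0 w clb cub a sp sm \<and>
     (\<forall>a' sp' sm'. feasible N k T I \<alpha> \<beta> \<gamma> C ul ub x0 w clb cub a' sp' sm' \<longrightarrow>
        fobj \<kappa> k N \<zeta> (avg I a) sp sm \<le> fobj \<kappa> k N \<zeta> (avg I a') sp' sm')"

end

theory Submission
  imports Defs
begin

(* Existence: letting every battery idle gives a feasible point, and for a fixed average
   profile abar the smallest admissible slacks max 0 (abar - cub) and max 0 (clb - abar) are
   optimal. Eliminating the slacks this way leaves a continuous function of the inputs and
   states of all batteries, which range over a compact subset of a product space.
   Uniqueness: the feasible set is convex, and for feasible p, p' and 0 <= u <= 1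
     f (u p + (1 - u) p') = u f p + (1 - u) f p'
                            - u (1 - u) (kappa |abar - abar'|^2 + (1 - kappa) |s - s'|^2),
   so for two optimal points the bracket must vanish. *)

lemma convex_comb_le:
  fixes x y a b u :: real
  assumes "x \<le> a" "y \<le> b" "0 \<le> u" "u \<le> 1"
  shows "u * x + (1 - u) * y \<le> u * a + (1 - u) * b"
  using assms by (intro add_mono mult_left_mono) auto

lemma Uset_convex_comb:
  assumes "(um, up) \<in> Uset ul ub" "(um', up') \<in> Uset ul ub" "0 \<le> u" "u \<le> 1"
  shows "(u * um + (1 - u) * um', u * up + (1 - u) * up') \<in> Uset ul ub"
proof -
  have "(u * um + (1 - u) * um') / ul + (u * up + (1 - u) * up') / ub
      = u * (um / ul + up / ub) + (1 - u) * (um' / ul + up' / ub)"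
    by (simp add: divide_inverse algebra_simps)
  with assms show ?thesis
    unfolding Uset_def
    using convex_comb_le[of ul um ul um' u] convex_comb_le[of um 0 um' 0 u]
      convex_comb_le[of 0 up 0 up' u] convex_comb_le[of up ub up' ub u]
      convex_comb_le[of 0 "um / ul + up / ub" 0 "um' / ul + up' / ub" u]
      convex_comb_le[of "um / ul + up / ub" 1 "um' / ul + up' / ub" 1 u]
    by (auto simp: algebra_simps)
qed

lemma Dset_convex_comb:
  assumes "z \<in> Dset N k T \<alpha> \<beta> \<gamma> C ul ub x0 w" "z' \<in> Dset N k T \<alpha> \<beta> \<gamma> C ul ub x0 w"
    and "0 \<le> u" "u \<le> 1"
  shows "(\<lambda>n. u * z n + (1 - u) * z' n) \<in> Dset N k T \<alpha> \<beta> \<gamma> C ul ub x0 w"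
proof -
  obtain um up x where x: "x k = x0" and
    step: "\<And>n. n \<in> window k N \<Longrightarrow> (um n, up n) \<in> Uset ul ub \<and>
      x (n+1) = \<alpha> * x n + T * (\<beta> * up n + um n) \<and> 0 \<le> x (n+1) \<and> x (n+1) \<le> C \<and>
      z n = w n + up n + \<gamma> * um n"
    using assms(1) unfolding Dset_def by blast
  obtain um' up' x' where x': "x' k = x0" and
    step': "\<And>n. n \<in> window k N \<Longrightarrow> (um' n, up' n) \<in> Uset ul ub \<and>
      x' (n+1) = \<alpha> * x' n + T * (\<beta> * up' n + um' n) \<and> 0 \<le> x' (n+1) \<and> x' (n+1) \<le> C \<and>
      z' n = w n + up' n + \<gamma> * um' n"
    using assms(2) unfolding Dset_def by blast
  let ?comb = "\<lambda>f g n. u * f n + (1 - u) * g n"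
  have init: "?comb x x' k = x0" using x x' by (simp add: algebra_simps)
  have comb_step: "(?comb um um' n, ?comb up up' n) \<in> Uset ul ub \<and>
      ?comb x x' (n+1) = \<alpha> * ?comb x x' n + T * (\<beta> * ?comb up up' n + ?comb um um' n) \<and>
      0 \<le> ?comb x x' (n+1) \<and> ?comb x x' (n+1) \<le> C \<and>
      ?comb z z' n = w n + ?comb up up' n + \<gamma> * ?comb um um' n"
    if n: "n \<in> window k N" for n
  proof (intro conjI)
    show "(?comb um um' n, ?comb up up' n) \<in> Uset ul ub"
      using step[OF n] step'[OF n] assms(3,4) by (intro Uset_convex_comb) auto
    show "0 \<le> ?comb x x' (n+1)" "?comb x x' (n+1) \<le> C"
      using step[OF n] step'[OF n] assms(3,4)
        convex_comb_le[of 0 "x (n+1)" 0 "x' (n+1)" u] convex_comb_le[of "x (n+1)" C "x' (n+1)" C u]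
      by (auto simp: algebra_simps)
    show "?comb x x' (n+1) = \<alpha> * ?comb x x' n + T * (\<beta> * ?comb up up' n + ?comb um um' n)"
      "?comb z z' n = w n + ?comb up up' n + \<gamma> * ?comb um um' n"
      using step[OF n] step'[OF n] by (auto simp: algebra_simps)
  qed
  show ?thesis
    unfolding Dset_def mem_Collect_eq
    by (intro exI[of _ "?comb um um'"] exI[of _ "?comb up up'"] exI[of _ "?comb x x'"]
        conjI ballI init comb_step)
qed

lemma Sset_convex_comb:
  assumes "Sset k N clb cub A sp sm" "Sset k N clb cub B sp' sm'" "0 \<le> u" "u \<le> 1"
  shows "Sset k N clb cub (\<lambda>n. u * A n + (1 - u) * B n)
    (\<lambda>n. u * sp n + (1 - u) * sp' n) (\<lambda>n. u * sm n + (1 - u) * sm' n)"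
  unfolding Sset_def
proof
  fix n assume n: "n \<in> window k N"
  then have "0 \<le> sp n" "0 \<le> sm n" "A n - sp n \<le> cub n" "- A n - sm n \<le> - clb n"
    "0 \<le> sp' n" "0 \<le> sm' n" "B n - sp' n \<le> cub n" "- B n - sm' n \<le> - clb n"
    using assms(1,2) unfolding Sset_def by auto
  then show "0 \<le> u * sp n + (1 - u) * sp' n \<and> 0 \<le> u * sm n + (1 - u) * sm' n \<and>
      u * A n + (1 - u) * B n - (u * sp n + (1 - u) * sp' n) \<le> cub n \<and>
      - (u * A n + (1 - u) * B n) - (u * sm n + (1 - u) * sm' n) \<le> - clb n"
    using convex_comb_le[of 0 "sp n" 0 "sp' n" u] convex_comb_le[of 0 "sm n" 0 "sm' n" u]
      convex_comb_le[of "A n - sp n" "cub n" "B n - sp' n" "cub n" u]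
      convex_comb_le[of "- A n - sm n" "- clb n" "- B n - sm' n" "- clb n" u] assms(3,4)
    by (auto simp: algebra_simps)
qed

lemma avg_convex_comb:
  "avg I (\<lambda>i n. u * a i n + (1 - u) * a' i n) n = u * avg I a n + (1 - u) * avg I a' n"
proof -
  have sum_comb: "(\<Sum>i=1..I. u * a i n + (1 - u) * a' i n)
      = u * (\<Sum>i=1..I. a i n) + (1 - u) * (\<Sum>i=1..I. a' i n)"
    by (simp add: sum.distrib sum_distrib_left)
  show ?thesis unfolding avg_def sum_comb by (simp add: distrib_left mult.left_commute)
qed

lemma feasible_convex_comb:
  assumes "feasible N k T I \<alpha> \<beta> \<gamma> C ul ub x0 w clb cub a sp sm"
    and "feasible N k T I \<alpha> \<beta> \<gamma> C ul ub x0 w clb cub a' sp' sm'"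
    and "0 \<le> u" "u \<le> 1"
  shows "feasible N k T I \<alpha> \<beta> \<gamma> C ul ub x0 w clb cub (\<lambda>i n. u * a i n + (1 - u) * a' i n)
    (\<lambda>n. u * sp n + (1 - u) * sp' n) (\<lambda>n. u * sm n + (1 - u) * sm' n)"
proof -
  obtain z z' where
    z: "\<forall>i\<in>{1..I}. z i \<in> Dset N k T (\<alpha> i) (\<beta> i) (\<gamma> i) (C i) (ul i) (ub i) (x0 i) (w i) \<and>
      (\<forall>n\<in>window k N. z i n - a i n = 0)" and
    z': "\<forall>i\<in>{1..I}. z' i \<in> Dset N k T (\<alpha> i) (\<beta> i) (\<gamma> i) (C i) (ul i) (ub i) (x0 i) (w i) \<and>
      (\<forall>n\<in>window k N. z' i n - a' i n = 0)"
    using assms(1,2) unfolding feasible_def by blast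
  have "Sset k N clb cub (avg I (\<lambda>i n. u * a i n + (1 - u) * a' i n))
      (\<lambda>n. u * sp n + (1 - u) * sp' n) (\<lambda>n. u * sm n + (1 - u) * sm' n)"
    using Sset_convex_comb[OF _ _ assms(3,4)] assms(1,2)
    unfolding feasible_def avg_convex_comb by blast
  moreover have "\<forall>i\<in>{1..I}. (\<lambda>n. u * z i n + (1 - u) * z' i n)
        \<in> Dset N k T (\<alpha> i) (\<beta> i) (\<gamma> i) (C i) (ul i) (ub i) (x0 i) (w i) \<and>
      (\<forall>n\<in>window k N. u * z i n + (1 - u) * z' i n - (u * a i n + (1 - u) * a' i n) = 0)"
  proof
    fix i assume i: "i \<in> {1..I}"
    then show "(\<lambda>n. u * z i n + (1 - u) * z' i n)
        \<in> Dset N k T (\<alpha> i) (\<beta> i) (\<gamma> i) (C i) (ul i) (ub i) (x0 i) (w i) \<and>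
      (\<forall>n\<in>window k N. u * z i n + (1 - u) * z' i n - (u * a i n + (1 - u) * a' i n) = 0)"
      using z z' by (auto intro: Dset_convex_comb[OF _ _ assms(3,4)])
  qed
  ultimately show ?thesis
    unfolding feasible_def by (intro conjI exI[of _ "\<lambda>i n. u * z i n + (1 - u) * z' i n"])
qed

lemma gfun_convex_comb:
  "gfun k N \<zeta> (\<lambda>n. u * A n + (1 - u) * B n)
    = u * gfun k N \<zeta> A + (1 - u) * gfun k N \<zeta> B - u * (1 - u) * gfun k N B A"
proof -
  have "(u * A n + (1 - u) * B n - \<zeta> n)\<^sup>2
      = u * (A n - \<zeta> n)\<^sup>2 + (1 - u) * (B n - \<zeta> n)\<^sup>2 - u * (1 - u) * (A n - B n)\<^sup>2" for n
    by (simp add: power2_eq_square algebra_simps)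
  then show ?thesis
    unfolding gfun_def by (simp add: sum.distrib sum_subtractf sum_distrib_left)
qed

lemma hfun_as_gfun: "hfun k N p q = gfun k N (\<lambda>_. 0) p + gfun k N (\<lambda>_. 0) q"
  by (simp add: hfun_def gfun_def sum.distrib)

lemma hfun_convex_comb:
  "hfun k N (\<lambda>n. u * p n + (1 - u) * p' n) (\<lambda>n. u * q n + (1 - u) * q' n)
    = u * hfun k N p q + (1 - u) * hfun k N p' q'
      - u * (1 - u) * hfun k N (\<lambda>n. p n - p' n) (\<lambda>n. q n - q' n)"
proof -
  have "gfun k N (\<lambda>_. 0) (\<lambda>n. A n - B n) = gfun k N B A" for A B :: "nat \<Rightarrow> real"
    by (simp add: gfun_def)
  then show ?thesis
    unfolding hfun_as_gfun gfun_convex_comb by (simp add: algebra_simps)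
qed

lemma gfun_nonneg: "0 \<le> gfun k N \<zeta> A"
  unfolding gfun_def by (intro sum_nonneg) simp

lemma hfun_nonneg: "0 \<le> hfun k N p q"
  unfolding hfun_def by (intro sum_nonneg) simp

lemma gfun_eq_0_iff: "gfun k N \<zeta> A = 0 \<longleftrightarrow> (\<forall>n\<in>window k N. A n = \<zeta> n)"
  unfolding gfun_def by (simp add: sum_nonneg_eq_0_iff window_def)

lemma hfun_eq_0_iff: "hfun k N p q = 0 \<longleftrightarrow> (\<forall>n\<in>window k N. p n = 0 \<and> q n = 0)"
  unfolding hfun_def by (simp add: sum_nonneg_eq_0_iff window_def add_nonneg_eq_0_iff)

lemma optimal_value_unique:
  assumes "optimal \<kappa> N k T I \<alpha> \<beta> \<gamma> C ul ub x0 w \<zeta> clb cub a sp sm"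
    and "optimal \<kappa> N k T I \<alpha> \<beta> \<gamma> C ul ub x0 w \<zeta> clb cub a' sp' sm'"
  shows "fobj \<kappa> k N \<zeta> (avg I a) sp sm = fobj \<kappa> k N \<zeta> (avg I a') sp' sm'"
  using assms unfolding optimal_def by (meson order_antisym)

lemma optimal_weighted_dist_le_0:
  assumes "optimal \<kappa> N k T I \<alpha> \<beta> \<gamma> C ul ub x0 w \<zeta> clb cub a sp sm"
    and "optimal \<kappa> N k T I \<alpha> \<beta> \<gamma> C ul ub x0 w \<zeta> clb cub a' sp' sm'"
  shows "\<kappa> * gfun k N (avg I a') (avg I a)
    + (1 - \<kappa>) * hfun k N (\<lambda>n. sp n - sp' n) (\<lambda>n. sm n - sm' n) \<le> 0"
proof -
  let ?f = "\<lambda>a sp sm. fobj \<kappa> k N \<zeta> (avg I a) sp sm"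
  let ?dist = "\<kappa> * gfun k N (avg I a') (avg I a)
    + (1 - \<kappa>) * hfun k N (\<lambda>n. sp n - sp' n) (\<lambda>n. sm n - sm' n)"
  let ?mid = "\<lambda>f g n. 1/2 * f n + (1 - 1/2) * g n"
  have "feasible N k T I \<alpha> \<beta> \<gamma> C ul ub x0 w clb cub (\<lambda>i. ?mid (a i) (a' i)) (?mid sp sp') (?mid sm sm')"
    using assms by (intro feasible_convex_comb) (auto simp: optimal_def)
  then have "?f a sp sm \<le> ?f (\<lambda>i. ?mid (a i) (a' i)) (?mid sp sp') (?mid sm sm')"
    using assms(1) unfolding optimal_def by blast
  also have "\<dots> = 1/2 * ?f a sp sm + 1/2 * ?f a' sp' sm' - 1/4 * ?dist"
    unfolding avg_convex_comb fobj_def gfun_convex_comb hfun_convex_comb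
    by (simp add: field_simps)
  finally show ?thesis using optimal_value_unique[OF assms] by simp
qed

lemma optimal_avg_unique:
  assumes "0 < \<kappa>" "\<kappa> \<le> 1"
    and "optimal \<kappa> N k T I \<alpha> \<beta> \<gamma> C ul ub x0 w \<zeta> clb cub a sp sm"
    and "optimal \<kappa> N k T I \<alpha> \<beta> \<gamma> C ul ub x0 w \<zeta> clb cub a' sp' sm'"
  shows "\<forall>n\<in>window k N. avg I a n = avg I a' n"
proof -
  have "0 \<le> (1 - \<kappa>) * hfun k N (\<lambda>n. sp n - sp' n) (\<lambda>n. sm n - sm' n)"
    using assms(2) hfun_nonneg by simp
  then have "\<kappa> * gfun k N (avg I a') (avg I a) \<le> 0"
    using optimal_weighted_dist_le_0[OF assms(3,4)] by linarith
  then have "gfun k N (avg I a') (avg I a) = 0"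
    using assms(1) gfun_nonneg by (meson antisym mult_le_0_iff not_le)
  then show ?thesis by (simp add: gfun_eq_0_iff)
qed

lemma optimal_slacks_unique:
  assumes "0 \<le> \<kappa>" "\<kappa> < 1"
    and "optimal \<kappa> N k T I \<alpha> \<beta> \<gamma> C ul ub x0 w \<zeta> clb cub a sp sm"
    and "optimal \<kappa> N k T I \<alpha> \<beta> \<gamma> C ul ub x0 w \<zeta> clb cub a' sp' sm'"
  shows "\<forall>n\<in>window k N. sp n = sp' n \<and> sm n = sm' n"
proof -
  have "0 \<le> \<kappa> * gfun k N (avg I a') (avg I a)"
    using assms(1) gfun_nonneg by simp
  then have "(1 - \<kappa>) * hfun k N (\<lambda>n. sp n - sp' n) (\<lambda>n. sm n - sm' n) \<le> 0"
    using optimal_weighted_dist_le_0[OF assms(3,4)] by linarith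
  then have "hfun k N (\<lambda>n. sp n - sp' n) (\<lambda>n. sm n - sm' n) = 0"
    using assms(2) hfun_nonneg by (meson antisym diff_gt_0_iff_gt mult_le_0_iff not_le)
  then show ?thesis by (simp add: hfun_eq_0_iff)
qed

definition upper_slack :: "(nat \<Rightarrow> real) \<Rightarrow> (nat \<Rightarrow> real) \<Rightarrow> nat \<Rightarrow> real" where
  "upper_slack cub abar n = max 0 (abar n - cub n)"

definition lower_slack :: "(nat \<Rightarrow> real) \<Rightarrow> (nat \<Rightarrow> real) \<Rightarrow> nat \<Rightarrow> real" where
  "lower_slack clb abar n = max 0 (clb n - abar n)"

definition reduced_fobj :: "real \<Rightarrow> nat \<Rightarrow> nat \<Rightarrow> (nat \<Rightarrow> real) \<Rightarrow> (nat \<Rightarrow> real)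
    \<Rightarrow> (nat \<Rightarrow> real) \<Rightarrow> (nat \<Rightarrow> real) \<Rightarrow> real" where
  "reduced_fobj \<kappa> k N \<zeta> clb cub abar =
     fobj \<kappa> k N \<zeta> abar (upper_slack cub abar) (lower_slack clb abar)"

lemma Sset_min_slacks: "Sset k N clb cub abar (upper_slack cub abar) (lower_slack clb abar)"
  by (auto simp: Sset_def upper_slack_def lower_slack_def)

lemma reduced_fobj_le:
  assumes "\<kappa> \<le> 1" "Sset k N clb cub abar sp sm"
  shows "reduced_fobj \<kappa> k N \<zeta> clb cub abar \<le> fobj \<kappa> k N \<zeta> abar sp sm"
proof -
  have "hfun k N (upper_slack cub abar) (lower_slack clb abar) \<le> hfun k N sp sm"
    unfolding hfun_def
  proof (rule sum_mono)
    fix n assume "n \<in> window k N"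
    then have "0 \<le> upper_slack cub abar n" "upper_slack cub abar n \<le> sp n"
      "0 \<le> lower_slack clb abar n" "lower_slack clb abar n \<le> sm n"
      using assms(2) by (auto simp: Sset_def upper_slack_def lower_slack_def)
    then show "(upper_slack cub abar n)\<^sup>2 + (lower_slack clb abar n)\<^sup>2 \<le> (sp n)\<^sup>2 + (sm n)\<^sup>2"
      by (intro add_mono power_mono)
  qed
  with assms(1) show ?thesis
    unfolding reduced_fobj_def fobj_def by (simp add: mult_left_mono)
qed

lemma reduced_fobj_cong:
  assumes "\<forall>n\<in>window k N. A n = B n"
  shows "reduced_fobj \<kappa> k N \<zeta> clb cub A = reduced_fobj \<kappa> k N \<zeta> clb cub B"
  using assms
  unfolding reduced_fobj_def fobj_def gfun_def hfun_def upper_slack_def lower_slack_def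
  by (simp cong: sum.cong)

lemma feasible_min_slacks:
  assumes "\<forall>i\<in>{1..I}. z i \<in> Dset N k T (\<alpha> i) (\<beta> i) (\<gamma> i) (C i) (ul i) (ub i) (x0 i) (w i)"
  shows "feasible N k T I \<alpha> \<beta> \<gamma> C ul ub x0 w clb cub z
    (upper_slack cub (avg I z)) (lower_slack clb (avg I z))"
  using assms Sset_min_slacks unfolding feasible_def by auto

lemma idle_profile_in_Dset:
  assumes "0 \<le> \<alpha>" "\<alpha> \<le> 1" "ul \<le> 0" "0 \<le> ub" "0 \<le> x0" "x0 \<le> C"
  shows "w \<in> Dset N k T \<alpha> \<beta> \<gamma> C ul ub x0 w"
proof -
  have decay: "0 \<le> x0 * \<alpha> ^ Suc m \<and> x0 * \<alpha> ^ Suc m \<le> C" for m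
    using assms mult_left_le[of "\<alpha> ^ Suc m" x0] power_le_one[of \<alpha> "Suc m"] by simp
  have idle: "(0, 0) \<in> Uset ul ub"
    using assms by (simp add: Uset_def)
  show ?thesis
    unfolding Dset_def mem_Collect_eq
    by (rule exI[of _ "\<lambda>_. 0"], rule exI[of _ "\<lambda>_. 0"], rule exI[of _ "\<lambda>n. x0 * \<alpha> ^ (n - k)"])
      (use decay idle in \<open>auto simp: window_def Suc_diff_le\<close>)
qed

lemma continuous_on_coordinate [continuous_intros]:
  "continuous_on S (\<lambda>v :: 'a \<Rightarrow> 'b::topological_space. v j)"
  by (rule continuous_on_subset[OF continuous_on_product_coordinates]) simp

lemma compact_PiE_UNIV:
  fixes S :: "'a \<Rightarrow> 'b::topological_space set"
  assumes "\<And>j. compact (S j)"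
  shows "compact (PiE UNIV S)"
proof -
  have "compactin (product_topology (\<lambda>_. euclidean) UNIV) (PiE UNIV S)"
    using assms by (simp add: compactin_PiE)
  then show ?thesis by (simp add: euclidean_product_topology)
qed

lemma ex_min_by_compact_reduction:
  fixes \<Phi> :: "'a::topological_space \<Rightarrow> real" and f :: "'b \<Rightarrow> real"
  assumes "compact P" "continuous_on P \<Phi>" "F \<noteq> {}"
    and lift: "\<And>v. v \<in> P \<Longrightarrow> \<exists>x\<in>F. f x \<le> \<Phi> v"
    and project: "\<And>x. x \<in> F \<Longrightarrow> \<exists>v\<in>P. \<Phi> v \<le> f x"
  shows "\<exists>x\<in>F. \<forall>y\<in>F. f x \<le> f y"
proof -
  from \<open>F \<noteq> {}\<close> project have "P \<noteq> {}" by blast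
  then obtain v0 where "v0 \<in> P" and v0_min: "\<forall>v\<in>P. \<Phi> v0 \<le> \<Phi> v"
    using continuous_attains_inf[OF assms(1) _ assms(2)] by blast
  with lift obtain x where "x \<in> F" "f x \<le> \<Phi> v0" by blast
  moreover have "\<Phi> v0 \<le> f y" if "y \<in> F" for y
    using project[OF that] v0_min by force
  ultimately show ?thesis by force
qed

text \<open>All inputs and states of the network are collected in one vector
  \<open>v :: nat \<times> nat \<times> nat \<Rightarrow> real\<close>: \<open>v (i, n, 0)\<close>, \<open>v (i, n, 1)\<close> and \<open>v (i, n, 2)\<close> stand
  for \<open>u\<^sub>i\<^sup>-(n)\<close>, \<open>u\<^sub>i\<^sup>+(n)\<close> and \<open>x\<^sub>i(n)\<close>.\<close>

definition ctrl_index :: "nat \<Rightarrow> nat \<Rightarrow> nat \<Rightarrow> (nat \<times> nat \<times> nat) set" where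
  "ctrl_index k N I =
     {(i, n, t). i \<in> {1..I} \<and> (t < 2 \<and> n \<in> window k N \<or> t = 2 \<and> n \<in> {k..k+N})}"

definition ctrl_box :: "nat \<Rightarrow> nat \<Rightarrow> nat \<Rightarrow> (nat \<Rightarrow> real) \<Rightarrow> (nat \<times> nat \<times> nat \<Rightarrow> real) set" where
  "ctrl_box k N I M =
     PiE UNIV (\<lambda>(i, n, t). if (i, n, t) \<in> ctrl_index k N I then {- M i..M i} else {0})"

definition ctrl_admissible :: "nat \<Rightarrow> nat \<Rightarrow> real \<Rightarrow> nat \<Rightarrow> (nat \<Rightarrow> real) \<Rightarrow> (nat \<Rightarrow> real)
    \<Rightarrow> (nat \<Rightarrow> real) \<Rightarrow> (nat \<Rightarrow> real) \<Rightarrow> (nat \<Rightarrow> real) \<Rightarrow> (nat \<Rightarrow> real)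
    \<Rightarrow> (nat \<times> nat \<times> nat \<Rightarrow> real) \<Rightarrow> bool" where
  "ctrl_admissible N k T I \<alpha> \<beta> C ul ub x0 v \<longleftrightarrow>
     (\<forall>i\<in>{1..I}. v (i, k, 2) = x0 i \<and>
        (\<forall>n\<in>window k N. (v (i, n, 0), v (i, n, 1)) \<in> Uset (ul i) (ub i) \<and>
           v (i, n+1, 2) = \<alpha> i * v (i, n, 2) + T * (\<beta> i * v (i, n, 1) + v (i, n, 0)) \<and>
           0 \<le> v (i, n+1, 2) \<and> v (i, n+1, 2) \<le> C i))"

definition ctrl_profile :: "(nat \<Rightarrow> nat \<Rightarrow> real) \<Rightarrow> (nat \<Rightarrow> real) \<Rightarrow> (nat \<times> nat \<times> nat \<Rightarrow> real)
    \<Rightarrow> nat \<Rightarrow> nat \<Rightarrow> real" where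
  "ctrl_profile w \<gamma> v i n = w i n + v (i, n, 1) + \<gamma> i * v (i, n, 0)"

lemma compact_ctrl_box: "compact (ctrl_box k N I M)"
  unfolding ctrl_box_def by (rule compact_PiE_UNIV) (auto split: prod.split)

lemma closed_ctrl_admissible: "closed {v. ctrl_admissible N k T I \<alpha> \<beta> C ul ub x0 v}"
  unfolding ctrl_admissible_def Uset_def Ball_def mem_Collect_eq case_prod_conv divide_inverse
  by (intro closed_Collect_all closed_Collect_imp open_Collect_const closed_Collect_conj
      closed_Collect_eq closed_Collect_le continuous_intros)

lemma ctrl_profile_in_Dset:
  assumes "ctrl_admissible N k T I \<alpha> \<beta> C ul ub x0 v" "i \<in> {1..I}"
  shows "ctrl_profile w \<gamma> v i \<in> Dset N k T (\<alpha> i) (\<beta> i) (\<gamma> i) (C i) (ul i) (ub i) (x0 i) (w i)"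
  unfolding Dset_def mem_Collect_eq
  by (rule exI[of _ "\<lambda>n. v (i, n, 0)"], rule exI[of _ "\<lambda>n. v (i, n, 1)"],
      rule exI[of _ "\<lambda>n. v (i, n, 2)"])
    (use assms in \<open>unfold ctrl_admissible_def ctrl_profile_def, blast\<close>)

lemma ctrl_admissible_in_box:
  assumes "ctrl_admissible N k T I \<alpha> \<beta> C ul ub x0 v"
    and "\<forall>j. j \<notin> ctrl_index k N I \<longrightarrow> v j = 0"
  shows "v \<in> ctrl_box k N I (\<lambda>i. \<bar>ul i\<bar> + \<bar>ub i\<bar> + \<bar>C i\<bar> + \<bar>x0 i\<bar>)"
proof -
  have "v (i, n, t) \<in> {- (\<bar>ul i\<bar> + \<bar>ub i\<bar> + \<bar>C i\<bar> + \<bar>x0 i\<bar>)..\<bar>ul i\<bar> + \<bar>ub i\<bar> + \<bar>C i\<bar> + \<bar>x0 i\<bar>}"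
    if "(i, n, t) \<in> ctrl_index k N I" for i n t
  proof -
    from that have i: "i \<in> {1..I}" and nt: "t < 2 \<and> n \<in> window k N \<or> t = 2 \<and> n \<in> {k..k+N}"
      by (auto simp: ctrl_index_def)
    consider "t = 0 \<or> t = 1" "n \<in> window k N" | "t = 2" "n = k"
      | "t = 2" "n - 1 \<in> window k N" "n - 1 + 1 = n"
      using nt by (force simp: window_def)
    then show ?thesis
    proof cases
      case 1
      then have "(v (i, n, 0), v (i, n, 1)) \<in> Uset (ul i) (ub i)"
        using i assms(1) by (auto simp: ctrl_admissible_def)
      with 1 show ?thesis by (auto simp: Uset_def)
    next
      case 2
      then show ?thesis using i assms(1) by (auto simp: ctrl_admissible_def)
    next
      case 3
      then have "0 \<le> v (i, n, 2) \<and> v (i, n, 2) \<le> C i"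
        using i assms(1) unfolding ctrl_admissible_def by metis
      with 3 show ?thesis by auto
    qed
  qed
  with assms(2) show ?thesis
    unfolding ctrl_box_def PiE_iff by auto
qed

lemma Dset_ctrl_representation:
  assumes "\<forall>i\<in>{1..I}. z i \<in> Dset N k T (\<alpha> i) (\<beta> i) (\<gamma> i) (C i) (ul i) (ub i) (x0 i) (w i)"
  shows "\<exists>v. ctrl_admissible N k T I \<alpha> \<beta> C ul ub x0 v \<and>
    (\<forall>j. j \<notin> ctrl_index k N I \<longrightarrow> v j = 0) \<and>
    (\<forall>i\<in>{1..I}. \<forall>n\<in>window k N. ctrl_profile w \<gamma> v i n = z i n)"
proof -
  obtain um up x where init: "\<And>i. i \<in> {1..I} \<Longrightarrow> x i k = x0 i"
    and step: "\<And>i n. i \<in> {1..I} \<Longrightarrow> n \<in> window k N \<Longrightarrow> (um i n, up i n) \<in> Uset (ul i) (ub i) \<and>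
      x i (n+1) = \<alpha> i * x i n + T * (\<beta> i * up i n + um i n) \<and> 0 \<le> x i (n+1) \<and> x i (n+1) \<le> C i \<and>
      z i n = w i n + up i n + \<gamma> i * um i n"
    using assms unfolding Dset_def mem_Collect_eq by metis
  define v where "v = (\<lambda>(i, n, t). if (i, n, t) \<in> ctrl_index k N I
    then (if t = 0 then um i n else if t = 1 then up i n else x i n) else 0)"
  have "v (i, k, 2) = x i k" if "i \<in> {1..I}" for i
    using that by (simp add: v_def ctrl_index_def)
  moreover have "v (i, n, 0) = um i n \<and> v (i, n, 1) = up i n \<and> v (i, n, 2) = x i n \<and>
      v (i, n+1, 2) = x i (n+1)" if "i \<in> {1..I}" "n \<in> window k N" for i n
    using that by (simp add: v_def ctrl_index_def window_def)
  ultimately have "ctrl_admissible N k T I \<alpha> \<beta> C ul ub x0 v"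
    and "\<forall>i\<in>{1..I}. \<forall>n\<in>window k N. ctrl_profile w \<gamma> v i n = z i n"
    using init step unfolding ctrl_admissible_def ctrl_profile_def by metis+
  moreover have "\<forall>j. j \<notin> ctrl_index k N I \<longrightarrow> v j = 0"
    by (auto simp: v_def)
  ultimately show ?thesis by blast
qed

lemma ctrl_admissible_feasible:
  assumes "ctrl_admissible N k T I \<alpha> \<beta> C ul ub x0 v"
  shows "feasible N k T I \<alpha> \<beta> \<gamma> C ul ub x0 w clb cub (ctrl_profile w \<gamma> v)
    (upper_slack cub (avg I (ctrl_profile w \<gamma> v))) (lower_slack clb (avg I (ctrl_profile w \<gamma> v)))"
  using assms ctrl_profile_in_Dset by (blast intro: feasible_min_slacks)

lemma feasible_dominated_by_ctrl:
  assumes "\<kappa> \<le> 1" "feasible N k T I \<alpha> \<beta> \<gamma> C ul ub x0 w clb cub a sp sm"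
  obtains v where "v \<in> ctrl_box k N I (\<lambda>i. \<bar>ul i\<bar> + \<bar>ub i\<bar> + \<bar>C i\<bar> + \<bar>x0 i\<bar>)"
    and "ctrl_admissible N k T I \<alpha> \<beta> C ul ub x0 v"
    and "reduced_fobj \<kappa> k N \<zeta> clb cub (avg I (ctrl_profile w \<gamma> v)) \<le> fobj \<kappa> k N \<zeta> (avg I a) sp sm"
proof -
  obtain z where
    z: "\<forall>i\<in>{1..I}. z i \<in> Dset N k T (\<alpha> i) (\<beta> i) (\<gamma> i) (C i) (ul i) (ub i) (x0 i) (w i) \<and>
      (\<forall>n\<in>window k N. z i n - a i n = 0)" and S: "Sset k N clb cub (avg I a) sp sm"
    using assms(2) unfolding feasible_def by blast
  then obtain v where adm: "ctrl_admissible N k T I \<alpha> \<beta> C ul ub x0 v"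
    and supp: "\<forall>j. j \<notin> ctrl_index k N I \<longrightarrow> v j = 0"
    and profile: "\<forall>i\<in>{1..I}. \<forall>n\<in>window k N. ctrl_profile w \<gamma> v i n = z i n"
    using Dset_ctrl_representation[of I z] by blast
  from z profile have "reduced_fobj \<kappa> k N \<zeta> clb cub (avg I (ctrl_profile w \<gamma> v))
      = reduced_fobj \<kappa> k N \<zeta> clb cub (avg I a)"
    by (intro reduced_fobj_cong) (simp add: avg_def)
  also have "\<dots> \<le> fobj \<kappa> k N \<zeta> (avg I a) sp sm"
    using reduced_fobj_le[OF assms(1) S] .
  finally show ?thesis
    using that adm ctrl_admissible_in_box[OF adm supp] by blast
qed

lemma optimal_exists:
  assumes "\<forall>i\<in>{1..I}. 0 \<le> \<alpha> i \<and> \<alpha> i \<le> 1 \<and> ul i \<le> 0 \<and> 0 \<le> ub i \<and> 0 \<le> x0 i \<and> x0 i \<le> C i"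
    and "\<kappa> \<le> 1"
  shows "\<exists>a sp sm. optimal \<kappa> N k T I \<alpha> \<beta> \<gamma> C ul ub x0 w \<zeta> clb cub a sp sm"
proof -
  define F where "F = {(a, sp, sm). feasible N k T I \<alpha> \<beta> \<gamma> C ul ub x0 w clb cub a sp sm}"
  define f where "f = (\<lambda>(a, sp, sm). fobj \<kappa> k N \<zeta> (avg I a) sp sm)"
  define P where "P = ctrl_box k N I (\<lambda>i. \<bar>ul i\<bar> + \<bar>ub i\<bar> + \<bar>C i\<bar> + \<bar>x0 i\<bar>)
    \<inter> {v. ctrl_admissible N k T I \<alpha> \<beta> C ul ub x0 v}"
  define \<Phi> where "\<Phi> v = reduced_fobj \<kappa> k N \<zeta> clb cub (avg I (ctrl_profile w \<gamma> v))" for v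
  have "feasible N k T I \<alpha> \<beta> \<gamma> C ul ub x0 w clb cub w
      (upper_slack cub (avg I w)) (lower_slack clb (avg I w))"
    using assms(1) idle_profile_in_Dset by (blast intro: feasible_min_slacks)
  then have "F \<noteq> {}" unfolding F_def by blast
  moreover have "compact P"
    unfolding P_def using compact_ctrl_box closed_ctrl_admissible by (rule compact_Int_closed)
  moreover have "continuous_on P \<Phi>"
    unfolding \<Phi>_def reduced_fobj_def fobj_def gfun_def hfun_def upper_slack_def lower_slack_def
      avg_def ctrl_profile_def
    by (intro continuous_intros)
  moreover have "\<exists>x\<in>F. f x \<le> \<Phi> v" if "v \<in> P" for v
  proof -
    let ?a = "ctrl_profile w \<gamma> v"
    from that have "ctrl_admissible N k T I \<alpha> \<beta> C ul ub x0 v" unfolding P_def by blast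
    then have "(?a, upper_slack cub (avg I ?a), lower_slack clb (avg I ?a)) \<in> F"
      unfolding F_def by (auto intro: ctrl_admissible_feasible)
    then show ?thesis unfolding f_def \<Phi>_def reduced_fobj_def by force
  qed
  moreover have "\<exists>v\<in>P. \<Phi> v \<le> f x" if "x \<in> F" for x
  proof -
    obtain a sp sm where x: "x = (a, sp, sm)" by (cases x)
    with that have "feasible N k T I \<alpha> \<beta> \<gamma> C ul ub x0 w clb cub a sp sm"
      unfolding F_def by blast
    then obtain v where "v \<in> ctrl_box k N I (\<lambda>i. \<bar>ul i\<bar> + \<bar>ub i\<bar> + \<bar>C i\<bar> + \<bar>x0 i\<bar>)"
      and "ctrl_admissible N k T I \<alpha> \<beta> C ul ub x0 v"
      and "reduced_fobj \<kappa> k N \<zeta> clb cub (avg I (ctrl_profile w \<gamma> v)) \<le> fobj \<kappa> k N \<zeta> (avg I a) sp sm"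
      by (rule feasible_dominated_by_ctrl[OF assms(2)])
    then show ?thesis unfolding x f_def P_def \<Phi>_def by auto
  qed
  ultimately obtain a sp sm where "(a, sp, sm) \<in> F" "\<forall>y\<in>F. f (a, sp, sm) \<le> f y"
    using ex_min_by_compact_reduction[of P \<Phi> F f] by auto
  then have "optimal \<kappa> N k T I \<alpha> \<beta> \<gamma> C ul ub x0 w \<zeta> clb cub a sp sm"
    unfolding F_def f_def optimal_def by auto
  then show ?thesis by blast
qed

theorem proposition1:
  fixes N k I :: nat and T \<kappa> :: real
    and \<alpha> \<beta> \<gamma> C ul ub x0 :: "nat \<Rightarrow> real" and w :: "nat \<Rightarrow> nat \<Rightarrow> real"
    and \<zeta> clb cub :: "nat \<Rightarrow> real"
  assumes "N \<ge> 2" and "T > 0" and "I \<ge> 1"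
    and "\<forall>i\<in>{1..I}. 0 < \<alpha> i \<and> \<alpha> i \<le> 1 \<and> 0 < \<beta> i \<and> \<beta> i \<le> 1 \<and> 0 < \<gamma> i \<and> \<gamma> i \<le> 1"
    and "\<forall>i\<in>{1..I}. 0 \<le> C i \<and> ul i < 0 \<and> 0 < ub i \<and> 0 \<le> x0 i \<and> x0 i \<le> C i"
    and "0 \<le> \<kappa>" and "\<kappa> \<le> 1"
  shows "(\<exists>a sp sm. optimal \<kappa> N k T I \<alpha> \<beta> \<gamma> C ul ub x0 w \<zeta> clb cub a sp sm)
    \<and> (0 < \<kappa> \<and> \<kappa> < 1 \<longrightarrow>
        (\<forall>a sp sm a' sp' sm'. optimal \<kappa> N k T I \<alpha> \<beta> \<gamma> C ul ub x0 w \<zeta> clb cub a sp sm \<and>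
            optimal \<kappa> N k T I \<alpha> \<beta> \<gamma> C ul ub x0 w \<zeta> clb cub a' sp' sm' \<longrightarrow>
            (\<forall>n\<in>window k N. avg I a n = avg I a' n \<and> sp n = sp' n \<and> sm n = sm' n)))
    \<and> (\<kappa> = 0 \<longrightarrow>
        (\<forall>a sp sm a' sp' sm'. optimal \<kappa> N k T I \<alpha> \<beta> \<gamma> C ul ub x0 w \<zeta> clb cub a sp sm \<and>
            optimal \<kappa> N k T I \<alpha> \<beta> \<gamma> C ul ub x0 w \<zeta> clb cub a' sp' sm' \<longrightarrow>
            hfun k N sp sm = hfun k N sp' sm' \<and>
            (\<forall>n\<in>window k N. sp n = sp' n \<and> sm n = sm' n)))
    \<and> (\<kappa> = 1 \<longrightarrow>
        (\<forall>a sp sm a' sp' sm'. optimal \<kappa> N k T I \<alpha> \<beta> \<gamma> C ul ub x0 w \<zeta> clb cub a sp sm \<and>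
            optimal \<kappa> N k T I \<alpha> \<beta> \<gamma> C ul ub x0 w \<zeta> clb cub a' sp' sm' \<longrightarrow>
            gfun k N \<zeta> (avg I a) = gfun k N \<zeta> (avg I a') \<and>
            (\<forall>n\<in>window k N. avg I a n = avg I a' n)))"
proof -
  have data: "\<forall>i\<in>{1..I}. 0 \<le> \<alpha> i \<and> \<alpha> i \<le> 1 \<and> ul i \<le> 0 \<and> 0 \<le> ub i \<and> 0 \<le> x0 i \<and> x0 i \<le> C i"
    using assms(4,5) by (simp add: less_imp_le)
  let ?optimal = "optimal \<kappa> N k T I \<alpha> \<beta> \<gamma> C ul ub x0 w \<zeta> clb cub"
  show ?thesis
  proof (intro conjI impI allI; (elim conjE)?)
    show "\<exists>a sp sm. ?optimal a sp sm"
      using optimal_exists[OF data assms(7)] .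
  next
    fix a sp sm a' sp' sm'
    assume "0 < \<kappa>" "\<kappa> < 1" and opt: "?optimal a sp sm" "?optimal a' sp' sm'"
    then show "\<forall>n\<in>window k N. avg I a n = avg I a' n \<and> sp n = sp' n \<and> sm n = sm' n"
      using optimal_avg_unique[OF _ _ opt] optimal_slacks_unique[OF _ _ opt] by simp
  next
    fix a sp sm a' sp' sm'
    assume "\<kappa> = 0" and opt: "?optimal a sp sm" "?optimal a' sp' sm'"
    then show "hfun k N sp sm = hfun k N sp' sm'"
      and "\<forall>n\<in>window k N. sp n = sp' n \<and> sm n = sm' n"
      using optimal_value_unique[OF opt] optimal_slacks_unique[OF _ _ opt] by (simp_all add: fobj_def)
  next
    fix a sp sm a' sp' sm'
    assume "\<kappa> = 1" and opt: "?optimal a sp sm" "?optimal a' sp' sm'"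
    then show "gfun k N \<zeta> (avg I a) = gfun k N \<zeta> (avg I a')"
      and "\<forall>n\<in>window k N. avg I a n = avg I a' n"
      using optimal_value_unique[OF opt] optimal_avg_unique[OF _ _ opt] by (simp_all add: fobj_def)
  qed
qed

end
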